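(* Let $\mathcal Y=(\Gamma,T)$ be a coherent configuration, $m\ge1$, $\Delta=\{1,\dots,m\}$, $L\le\mathrm{Sym}(\Delta)$, and $\mathcal X=\mathcal Y\uparrow L=(\Omega,S)$ with $\Omega=\Gamma^m$. For $\alpha,\beta\in\Omega$ let $d(\alpha,\beta)$ be the number of $i\in\Delta$ with $\alpha_i\neq\beta_i$, let $r_i=\{(\alpha,\beta):d(\alpha,\beta)=i\}$ for $0\le i\le m$, $r_{-1}=\emptyset$ and $r=r_1$. Fix $\gamma_0\in\Gamma$, let $\alpha\in\Omega$ be the point with all coordinates $\gamma_0$, and for $i\in\Delta$ let $\Gamma_i=\{\beta\in\Omega:d(\alpha,\beta)=1,\ \beta_i\ne\gamma_0\}$, so that $\alpha r=\{\beta:(\alpha,\beta)\in r\}$ is the disjoint union of the $\Gamma_i$. Then the map $\rho:\Omega\to2^{\alpha r}$, $\beta\mapsto\beta r_{d-1}\cap\alpha r$ where $d=d(\alpha,\beta)$ (and $\beta r_{d-1}=\{\delta:(\beta,\delta)\in r_{d-1}\}$), is injective and its image is $\{\Lambda\subseteq\alpha r: |\Lambda\cap\Gamma_i|\le 1\text{ for all }i\in\Delta\}$. In particular, the set $\alpha r$ is a base of the coherent configuration $\mathcal X_\alpha$.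
   Context: A coherent configuration on a finite set $\Omega$ is $(\Omega,S)$ with $S$ a partition of $\Omega\times\Omega$ such that $1_\Omega$ is a union of elements of $S$, $s^*=\{(\beta,\alpha):(\alpha,\beta)\in s\}\in S$, and for $r,s,t\in S$ the number $|\{\gamma:(\alpha,\gamma)\in r,(\gamma,\beta)\in s\}|$ is independent of $(\alpha,\beta)\in t$; fibers are sets $\Gamma$ with $1_\Gamma\in S$. Exponentiation: for $t_1,\dots,t_m\in T$ put $t_1\otimes\dots\otimes t_m=\{(\alpha,\beta)\in\Gamma^m\times\Gamma^m:(\alpha_i,\beta_i)\in t_i\ \forall i\}$; $L$ acts on $\Gamma^m$ by permuting coordinates and hence on such relations; $\mathcal Y\uparrow L=(\Gamma^m,\{\bigcup_{l\in L}t^l:t=t_1\otimes\dots\otimes t_m,\ t_i\in T\})$, a coherent configuration. A fission of $\mathcal X$ is a coherent configuration on $\Omega$ whose relations (unions of basic relations) include those of $\mathcal X$; complete: all basic relations singletons. $\mathcal X_\alpha$ is the smallest fission of $\mathcal X$ in which $\{\alpha\}$ is a fiber. A set $B$ is a base of a coherent configuration $\mathcal Z$ if the smallest fission of $\mathcal Z$ in which every $\{\beta\}$, $\beta\in B$, is a fiber is complete. *)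

theory Defs
  imports "HOL-Combinatorics.Permutations"
begin

definition is_partition_of :: "'a set \<Rightarrow> 'a set set \<Rightarrow> bool" where
  "is_partition_of X S \<longleftrightarrow> \<Union>S = X \<and> {} \<notin> S \<and>
     (\<forall>s\<in>S. \<forall>t\<in>S. s \<noteq> t \<longrightarrow> s \<inter> t = {})"

definition rels :: "('a \<times> 'a) set set \<Rightarrow> ('a \<times> 'a) set set" where
  "rels S = Union ` Pow S"

definition coherent_configuration :: "'a set \<Rightarrow> ('a \<times> 'a) set set \<Rightarrow> bool" where
  "coherent_configuration \<Omega> S \<longleftrightarrow>
     finite \<Omega> \<and>
     is_partition_of (\<Omega> \<times> \<Omega>) S \<and>
     Id_on \<Omega> \<in> rels S \<and>
     (\<forall>s\<in>S. converse s \<in> S) \<and>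
     (\<forall>r\<in>S. \<forall>s\<in>S. \<forall>t\<in>S. \<exists>c::nat. \<forall>(a, b)\<in>t.
        card {g. (a, g) \<in> r \<and> (g, b) \<in> s} = c)"

definition is_fiber :: "('a \<times> 'a) set set \<Rightarrow> 'a set \<Rightarrow> bool" where
  "is_fiber S \<Delta> \<longleftrightarrow> Id_on \<Delta> \<in> S"

definition fission :: "'a set \<Rightarrow> ('a \<times> 'a) set set \<Rightarrow> ('a \<times> 'a) set set \<Rightarrow> bool" where
  "fission \<Omega> S' S \<longleftrightarrow> coherent_configuration \<Omega> S' \<and> rels S \<subseteq> rels S'"

definition complete_cc :: "'a set \<Rightarrow> ('a \<times> 'a) set set \<Rightarrow> bool" where
  "complete_cc \<Omega> S \<longleftrightarrow> coherent_configuration \<Omega> S \<and> (\<forall>s\<in>S. card s = 1)"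

definition smallest_fission ::
  "'a set \<Rightarrow> ('a \<times> 'a) set set \<Rightarrow> (('a \<times> 'a) set set \<Rightarrow> bool) \<Rightarrow> ('a \<times> 'a) set set" where
  "smallest_fission \<Omega> S P = (THE S'. fission \<Omega> S' S \<and> P S' \<and>
      (\<forall>S''. fission \<Omega> S'' S \<and> P S'' \<longrightarrow> rels S' \<subseteq> rels S''))"

definition point_extension :: "'a set \<Rightarrow> ('a \<times> 'a) set set \<Rightarrow> 'a \<Rightarrow> ('a \<times> 'a) set set" where
  "point_extension \<Omega> S \<alpha> = smallest_fission \<Omega> S (\<lambda>S'. is_fiber S' {\<alpha>})"

definition is_base :: "'a set \<Rightarrow> ('a \<times> 'a) set set \<Rightarrow> 'a set \<Rightarrow> bool" where
  "is_base \<Omega> S B \<longleftrightarrow>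
     complete_cc \<Omega> (smallest_fission \<Omega> S (\<lambda>S'. \<forall>\<beta>\<in>B. is_fiber S' {\<beta>}))"

text \<open>Points of \<Gamma>^m are lists of length m, coordinates indexed by {0..<m}.\<close>
definition cart_power :: "'a set \<Rightarrow> nat \<Rightarrow> 'a list set" where
  "cart_power \<Gamma> m = {a. length a = m \<and> set a \<subseteq> \<Gamma>}"

definition tensor :: "nat \<Rightarrow> ('a \<times> 'a) set list \<Rightarrow> ('a list \<times> 'a list) set" where
  "tensor m ts = {(a, b). length a = m \<and> length b = m \<and> (\<forall>i<m. (a ! i, b ! i) \<in> ts ! i)}"

text \<open>action of a permutation l of coordinates: coordinate i is moved to l i\<close>
definition perm_pt :: "(nat \<Rightarrow> nat) \<Rightarrow> 'a list \<Rightarrow> 'a list" where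
  "perm_pt l a = map (\<lambda>j. a ! inv l j) [0..<length a]"

definition perm_rel :: "(nat \<Rightarrow> nat) \<Rightarrow> ('a list \<times> 'a list) set \<Rightarrow> ('a list \<times> 'a list) set" where
  "perm_rel l t = (\<lambda>(a, b). (perm_pt l a, perm_pt l b)) ` t"

definition exp_rels :: "('a \<times> 'a) set set \<Rightarrow> nat \<Rightarrow> (nat \<Rightarrow> nat) set \<Rightarrow> ('a list \<times> 'a list) set set" where
  "exp_rels T m L = {\<Union>l\<in>L. perm_rel l (tensor m ts) | ts. length ts = m \<and> set ts \<subseteq> T}"

definition perm_group_on :: "nat set \<Rightarrow> (nat \<Rightarrow> nat) set \<Rightarrow> bool" where
  "perm_group_on \<Delta> L \<longleftrightarrow> id \<in> L \<and> (\<forall>l\<in>L. l permutes \<Delta>) \<and>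
     (\<forall>l\<in>L. \<forall>l'\<in>L. l \<circ> l' \<in> L) \<and> (\<forall>l\<in>L. inv l \<in> L)"

definition hdist :: "nat \<Rightarrow> 'a list \<Rightarrow> 'a list \<Rightarrow> nat" where
  "hdist m a b = card {i. i < m \<and> a ! i \<noteq> b ! i}"

text \<open>r_k for integer k (r_{-1} = empty)\<close>
definition dist_rel :: "'a set \<Rightarrow> nat \<Rightarrow> int \<Rightarrow> ('a list \<times> 'a list) set" where
  "dist_rel \<Gamma> m k = (if k < 0 then {} else
     {(a, b). a \<in> cart_power \<Gamma> m \<and> b \<in> cart_power \<Gamma> m \<and> int (hdist m a b) = k})"

end

theory Submission
  imports Defs
begin

text \<open>
  Write \<open>\<alpha> = (\<gamma>\<^sub>0, \<dots>, \<gamma>\<^sub>0)\<close>. The neighbours of \<open>\<alpha>\<close> lying on a geodesic from \<open>\<alpha>\<close> to \<open>\<beta>\<close> are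
  exactly the points \<open>\<alpha>[i := \<beta>\<^sub>i]\<close> with \<open>\<beta>\<^sub>i \<noteq> \<gamma>\<^sub>0\<close>, one in each coordinate where \<open>\<beta>\<close>
  differs from \<open>\<alpha>\<close>; this makes \<open>\<rho>\<close> injective and identifies its image.

  For the base property, the distance relations \<open>r\<^sub>k\<close> are unions of basic relations of
  \<open>\<Y> \<up> L\<close>, since tensor products of basic relations of \<open>\<Y>\<close> and permutations of coordinates
  preserve Hamming distance. In a fission where \<open>\<alpha>\<close> and every point of \<open>\<alpha>r\<close> form singleton
  fibers, two points of a common fiber relate in the same way to every singleton fiber; so they
  have the same distance \<open>d\<close> from \<open>\<alpha>\<close> and the same set of points of \<open>\<alpha>r\<close> at distance
  \<open>d - 1\<close>, i.e. the same image under \<open>\<rho>\<close>. By injectivity all fibers are singletons, so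
  the fission is complete.
\<close>

subsection \<open>Partitions\<close>

lemma partition_disjoint:
  "is_partition_of X S \<Longrightarrow> s \<in> S \<Longrightarrow> t \<in> S \<Longrightarrow> s \<inter> t \<noteq> {} \<Longrightarrow> s = t"
  unfolding is_partition_of_def by metis

lemma partition_cover: "is_partition_of X S \<Longrightarrow> p \<in> X \<Longrightarrow> \<exists>s\<in>S. p \<in> s"
  unfolding is_partition_of_def by auto

lemma partition_subset: "is_partition_of X S \<Longrightarrow> s \<in> S \<Longrightarrow> s \<subseteq> X"
  unfolding is_partition_of_def by auto

lemma partition_nonempty: "is_partition_of X S \<Longrightarrow> s \<in> S \<Longrightarrow> s \<noteq> {}"
  unfolding is_partition_of_def by auto

lemma rels_intro: "(\<And>p. p \<in> R \<Longrightarrow> \<exists>s\<in>S. p \<in> s \<and> s \<subseteq> R) \<Longrightarrow> R \<in> rels S"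
proof -
  assume "\<And>p. p \<in> R \<Longrightarrow> \<exists>s\<in>S. p \<in> s \<and> s \<subseteq> R"
  then have "R = \<Union>{s\<in>S. s \<subseteq> R}" by blast
  then show "R \<in> rels S" unfolding rels_def by blast
qed

lemma rels_basic: "s \<in> S \<Longrightarrow> s \<in> rels S"
  unfolding rels_def by (rule image_eqI[where x = "{s}"]) auto

lemma rels_iff:
  assumes P: "is_partition_of X S"
  shows "R \<in> rels S \<longleftrightarrow> R \<subseteq> X \<and> (\<forall>s\<in>S. s \<inter> R \<noteq> {} \<longrightarrow> s \<subseteq> R)"
proof
  assume "R \<in> rels S"
  then obtain U where U: "U \<subseteq> S" "R = \<Union>U" unfolding rels_def by auto
  have "R \<subseteq> X" using U partition_subset[OF P] by blast
  moreover have "s \<subseteq> R" if s: "s \<in> S" "s \<inter> R \<noteq> {}" for s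
  proof -
    obtain u where u: "u \<in> U" "s \<inter> u \<noteq> {}" using U(2) s(2) by auto
    then have "s = u" using partition_disjoint[OF P s(1)] U(1) by blast
    then show ?thesis using u(1) U(2) by blast
  qed
  ultimately show "R \<subseteq> X \<and> (\<forall>s\<in>S. s \<inter> R \<noteq> {} \<longrightarrow> s \<subseteq> R)" by blast
next
  assume H: "R \<subseteq> X \<and> (\<forall>s\<in>S. s \<inter> R \<noteq> {} \<longrightarrow> s \<subseteq> R)"
  show "R \<in> rels S"
  proof (rule rels_intro)
    fix p assume p: "p \<in> R"
    then obtain s where s: "s \<in> S" "p \<in> s" using partition_cover[OF P, of p] H by blast
    then have "s \<subseteq> R" using H p by blast
    then show "\<exists>s\<in>S. p \<in> s \<and> s \<subseteq> R" using s by blast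
  qed
qed

lemma rels_obtain_basic:
  assumes P: "is_partition_of X S" and R: "R \<in> rels S" "p \<in> R"
  obtains s where "s \<in> S" "p \<in> s" "s \<subseteq> R"
proof -
  have RX: "R \<subseteq> X" and sat: "\<forall>s\<in>S. s \<inter> R \<noteq> {} \<longrightarrow> s \<subseteq> R"
    using R(1) rels_iff[OF P] by simp_all
  obtain s where "s \<in> S" "p \<in> s" using partition_cover[OF P] R(2) RX by blast
  then show ?thesis using that sat R(2) by blast
qed

lemma partition_eq_if_rels_eq:
  assumes P1: "is_partition_of X S1" and P2: "is_partition_of X S2" and eq: "rels S1 = rels S2"
  shows "S1 = S2"
proof -
  have *: "T1 \<subseteq> T2" if Q1: "is_partition_of X T1" and Q2: "is_partition_of X T2"
    and e: "rels T1 = rels T2" for T1 T2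
  proof
    fix s assume s: "s \<in> T1"
    obtain p where p: "p \<in> s" using partition_nonempty[OF Q1 s] by auto
    obtain u where u: "u \<in> T2" "p \<in> u" "u \<subseteq> s"
      using rels_obtain_basic[OF Q2 _ p] rels_basic[OF s] e by metis
    have "s \<subseteq> u" using s u p rels_iff[OF Q1, of u] e rels_basic[OF u(1)] by auto
    then show "s \<in> T2" using u by auto
  qed
  show ?thesis using *[OF P1 P2 eq] *[OF P2 P1 eq[symmetric]] by (rule subset_antisym)
qed

lemma singleton_basic_if_rels:
  assumes P: "is_partition_of X S" and p: "{p} \<in> rels S"
  shows "{p} \<in> S"
  using rels_obtain_basic[OF P p] by (metis singletonI subset_singletonD empty_iff)

lemma rels_subset: "is_partition_of X S \<Longrightarrow> R \<in> rels S \<Longrightarrow> R \<subseteq> X"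
  using rels_iff[of X S R] by blast

lemma rels_saturated:
  "is_partition_of X S \<Longrightarrow> R \<in> rels S \<Longrightarrow> s \<in> S \<Longrightarrow> s \<inter> R \<noteq> {} \<Longrightarrow> s \<subseteq> R"
  using rels_iff[of X S R] by blast

lemma rels_saturatedI:
  "is_partition_of X S \<Longrightarrow> R \<subseteq> X \<Longrightarrow> (\<And>s. s \<in> S \<Longrightarrow> s \<inter> R \<noteq> {} \<Longrightarrow> s \<subseteq> R) \<Longrightarrow> R \<in> rels S"
  using rels_iff[of X S R] by blast

text \<open>A family of subsets of \<open>X\<close> of the form \<open>rels S\<close> is exactly a complete Boolean
  subalgebra of \<open>Pow X\<close>; its atoms recover the partition.\<close>

definition complete_subalgebra :: "'b set \<Rightarrow> 'b set set \<Rightarrow> bool" where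
  "complete_subalgebra X F \<longleftrightarrow> X \<in> F \<and> F \<subseteq> Pow X \<and> (\<forall>G\<subseteq>F. \<Union>G \<in> F) \<and>
     (\<forall>G\<subseteq>F. G \<noteq> {} \<longrightarrow> \<Inter>G \<in> F) \<and> (\<forall>R\<in>F. X - R \<in> F)"

definition atom :: "'b set set \<Rightarrow> 'b \<Rightarrow> 'b set" where
  "atom F p = \<Inter>{R \<in> F. p \<in> R}"

lemma complete_subalgebra_rels:
  assumes P: "is_partition_of X S"
  shows "complete_subalgebra X (rels S)"
  unfolding complete_subalgebra_def
proof (intro conjI allI impI ballI)
  note sub = rels_subset[OF P] and sat = rels_saturated[OF P] and I = rels_saturatedI[OF P]
  show "X \<in> rels S" by (rule I) (simp_all add: partition_subset[OF P])
  show "rels S \<subseteq> Pow X" using sub by blast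
  show "\<Union>G \<in> rels S" if "G \<subseteq> rels S" for G
  proof (rule I)
    show "\<Union>G \<subseteq> X" using that sub by blast
    fix s assume "s \<in> S" "s \<inter> \<Union>G \<noteq> {}"
    then obtain R where "R \<in> G" "s \<inter> R \<noteq> {}" by blast
    then show "s \<subseteq> \<Union>G" using sat[of R s] that \<open>s \<in> S\<close> by blast
  qed
  show "\<Inter>G \<in> rels S" if "G \<subseteq> rels S" "G \<noteq> {}" for G
  proof (rule I)
    show "\<Inter>G \<subseteq> X" using that sub by blast
    fix s assume "s \<in> S" "s \<inter> \<Inter>G \<noteq> {}"
    then have "s \<subseteq> R" if "R \<in> G" for R using sat[of R s] that \<open>G \<subseteq> rels S\<close> by blast
    then show "s \<subseteq> \<Inter>G" by blast
  qed
  show "X - R \<in> rels S" if "R \<in> rels S" for R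
  proof (rule I)
    fix s assume s: "s \<in> S" "s \<inter> (X - R) \<noteq> {}"
    have "s \<inter> R = {}" using sat[OF that s(1)] s(2) by blast
    then show "s \<subseteq> X - R" using partition_subset[OF P s(1)] by blast
  qed blast
qed

lemma complete_subalgebra_INT:
  assumes A: "\<And>k. k \<in> K \<Longrightarrow> complete_subalgebra X (A k)"
  shows "complete_subalgebra X (Pow X \<inter> (\<Inter>k\<in>K. A k))"
proof -
  have A': "X \<in> A k" "\<And>G. G \<subseteq> A k \<Longrightarrow> \<Union>G \<in> A k"
    "\<And>G. G \<subseteq> A k \<Longrightarrow> G \<noteq> {} \<Longrightarrow> \<Inter>G \<in> A k" "\<And>R. R \<in> A k \<Longrightarrow> X - R \<in> A k"
    if "k \<in> K" for k
    using A[OF that] unfolding complete_subalgebra_def by blast+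
  show ?thesis
    unfolding complete_subalgebra_def
  proof (intro conjI allI impI ballI)
    show "X \<in> Pow X \<inter> (\<Inter>k\<in>K. A k)" using A' by blast
    show "Pow X \<inter> (\<Inter>k\<in>K. A k) \<subseteq> Pow X" by blast
    fix G assume G: "G \<subseteq> Pow X \<inter> (\<Inter>k\<in>K. A k)"
    have "\<Union>G \<in> A k" if "k \<in> K" for k using A'(2)[OF that] G that by blast
    then show "\<Union>G \<in> Pow X \<inter> (\<Inter>k\<in>K. A k)" using G by blast
    assume "G \<noteq> {}"
    then have "\<Inter>G \<in> A k" if "k \<in> K" for k using A'(3)[OF that] G that by blast
    then show "\<Inter>G \<in> Pow X \<inter> (\<Inter>k\<in>K. A k)" using G \<open>G \<noteq> {}\<close> by blast
  next
    fix R assume R: "R \<in> Pow X \<inter> (\<Inter>k\<in>K. A k)"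
    have "X - R \<in> A k" if "k \<in> K" for k using A'(4)[OF that] R that by blast
    then show "X - R \<in> Pow X \<inter> (\<Inter>k\<in>K. A k)" by blast
  qed
qed

context
  fixes X F assumes F: "complete_subalgebra X F"
begin

lemma complete_subalgebra_top: "X \<in> F"
  using F unfolding complete_subalgebra_def by simp

lemma complete_subalgebra_subset: "R \<in> F \<Longrightarrow> R \<subseteq> X"
  using F unfolding complete_subalgebra_def by auto

lemma complete_subalgebra_Union: "G \<subseteq> F \<Longrightarrow> \<Union>G \<in> F"
  using F unfolding complete_subalgebra_def by simp

lemma complete_subalgebra_Inter: "G \<subseteq> F \<Longrightarrow> G \<noteq> {} \<Longrightarrow> \<Inter>G \<in> F"
  using F unfolding complete_subalgebra_def by simp

lemma complete_subalgebra_Diff: "R \<in> F \<Longrightarrow> X - R \<in> F"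
  using F unfolding complete_subalgebra_def by simp

lemma mem_atom: "p \<in> atom F p"
  unfolding atom_def by simp

lemma atom_subset: "R \<in> F \<Longrightarrow> p \<in> R \<Longrightarrow> atom F p \<subseteq> R"
  unfolding atom_def by (rule Inter_lower) simp

lemma atom_in: "p \<in> X \<Longrightarrow> atom F p \<in> F"
  unfolding atom_def by (rule complete_subalgebra_Inter) (use complete_subalgebra_top in auto)

lemma atom_subset_carrier: "p \<in> X \<Longrightarrow> atom F p \<subseteq> X"
  by (rule atom_subset[OF complete_subalgebra_top])

lemma atom_eq:
  assumes p: "p \<in> X" and q: "q \<in> atom F p"
  shows "atom F q = atom F p"
proof -
  have qX: "q \<in> X" using subsetD[OF atom_subset_carrier[OF p] q] .
  have "p \<in> atom F q"
  proof (rule ccontr)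
    assume "p \<notin> atom F q"
    then have "p \<in> X - atom F q" using p by simp
    then have "atom F p \<subseteq> X - atom F q" by (rule atom_subset[OF complete_subalgebra_Diff[OF atom_in[OF qX]]])
    then show False using q mem_atom[of q] by auto
  qed
  then have "atom F p \<subseteq> atom F q" by (rule atom_subset[OF atom_in[OF qX]])
  moreover have "atom F q \<subseteq> atom F p" using q by (rule atom_subset[OF atom_in[OF p]])
  ultimately show ?thesis by (rule subset_antisym[rotated])
qed

lemma atoms_partition: "is_partition_of X (atom F ` X)"
  unfolding is_partition_of_def
proof (intro conjI ballI impI)
  show "\<Union>(atom F ` X) = X" using atom_subset_carrier mem_atom by auto
  show "{} \<notin> atom F ` X" using mem_atom by auto
  fix s t assume "s \<in> atom F ` X" "t \<in> atom F ` X" "s \<noteq> t"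
  then obtain p q where "p \<in> X" "q \<in> X" "s = atom F p" "t = atom F q" "atom F p \<noteq> atom F q"
    by auto
  then show "s \<inter> t = {}" using atom_eq by (metis disjoint_iff)
qed

end

lemma rels_atoms:
  fixes X :: "('a \<times> 'a) set"
  assumes F: "complete_subalgebra X F"
  shows "rels (atom F ` X) = F"
proof
  show "rels (atom F ` X) \<subseteq> F"
  proof
    fix R assume "R \<in> rels (atom F ` X)"
    then obtain U where U: "U \<subseteq> atom F ` X" "R = \<Union>U" unfolding rels_def by auto
    have "U \<subseteq> F" using U(1) atom_in[OF F] by auto
    then show "R \<in> F" unfolding U(2) by (rule complete_subalgebra_Union[OF F])
  qed
  show "F \<subseteq> rels (atom F ` X)"
  proof
    fix R assume R: "R \<in> F"
    show "R \<in> rels (atom F ` X)"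
    proof (rule rels_intro)
      fix p assume p: "p \<in> R"
      then have "p \<in> X" using complete_subalgebra_subset[OF F R] by auto
      then show "\<exists>s\<in>atom F ` X. p \<in> s \<and> s \<subseteq> R"
        using mem_atom[OF F, of p] atom_subset[OF F R p] \<open>p \<in> X\<close> by blast
    qed
  qed
qed

subsection \<open>Coherent configurations\<close>

lemma Id_on_singleton [simp]: "Id_on {a} = {(a, a)}"
  by auto

lemma cc_finite: "coherent_configuration \<Omega> S \<Longrightarrow> finite \<Omega>"
  unfolding coherent_configuration_def by simp

lemma cc_partition: "coherent_configuration \<Omega> S \<Longrightarrow> is_partition_of (\<Omega> \<times> \<Omega>) S"
  unfolding coherent_configuration_def by simp

lemma cc_subset: "coherent_configuration \<Omega> S \<Longrightarrow> s \<in> S \<Longrightarrow> s \<subseteq> \<Omega> \<times> \<Omega>"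
  using cc_partition partition_subset by blast

lemma cc_converse: "coherent_configuration \<Omega> S \<Longrightarrow> s \<in> S \<Longrightarrow> converse s \<in> S"
  unfolding coherent_configuration_def by simp

lemma cc_Id_on: "coherent_configuration \<Omega> S \<Longrightarrow> Id_on \<Omega> \<in> rels S"
  unfolding coherent_configuration_def by simp

lemma cc_card_paths_eq:
  assumes "coherent_configuration \<Omega> S" "r \<in> S" "s \<in> S" "t \<in> S" "(a, b) \<in> t" "(a', b') \<in> t"
  shows "card {g. (a, g) \<in> r \<and> (g, b) \<in> s} = card {g. (a', g) \<in> r \<and> (g, b') \<in> s}"
proof -
  obtain c where "\<forall>(a, b)\<in>t. card {g. (a, g) \<in> r \<and> (g, b) \<in> s} = c"
    using assms(1-4) unfolding coherent_configuration_def by blast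
  then have "card {g. (a, g) \<in> r \<and> (g, b) \<in> s} = c" "card {g. (a', g) \<in> r \<and> (g, b') \<in> s} = c"
    using assms(5,6) by auto
  then show ?thesis by simp
qed

lemma cc_basic_subset_Id_on:
  assumes cc: "coherent_configuration \<Omega> S" and s: "s \<in> S" "s \<inter> Id_on \<Omega> \<noteq> {}"
  shows "s \<subseteq> Id_on \<Omega>"
  using rels_saturated[OF cc_partition[OF cc] cc_Id_on[OF cc] s] .

text \<open>Split the paths according to the basic relations contained in \<open>R1\<close> and \<open>R2\<close>.\<close>

lemma cc_card_paths_rels_eq:
  fixes \<Omega> :: "'a set"
  assumes cc: "coherent_configuration \<Omega> S" and R1: "R1 \<in> rels S" and R2: "R2 \<in> rels S"
    and t: "t \<in> S" "(a, b) \<in> t" "(a', b') \<in> t"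
  shows "card {g. (a, g) \<in> R1 \<and> (g, b) \<in> R2} = card {g. (a', g) \<in> R1 \<and> (g, b') \<in> R2}"
proof -
  obtain U1 where U1: "U1 \<subseteq> S" "R1 = \<Union>U1" using R1 unfolding rels_def by auto
  obtain U2 where U2: "U2 \<subseteq> S" "R2 = \<Union>U2" using R2 unfolding rels_def by auto
  have part: "is_partition_of (\<Omega> \<times> \<Omega>) S" using cc by (rule cc_partition)
  have fin\<Omega>: "finite \<Omega>" using cc by (rule cc_finite)
  have "finite S"
    by (rule finite_subset[of _ "Pow (\<Omega> \<times> \<Omega>)"]) (use cc_subset[OF cc] fin\<Omega> in auto)
  then have fin12: "finite (U1 \<times> U2)" using U1(1) U2(1) finite_subset by blast
  define paths :: "'a \<Rightarrow> 'a \<Rightarrow> ('a \<times> 'a) set \<times> ('a \<times> 'a) set \<Rightarrow> 'a set"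
    where "paths x y = (\<lambda>(u1, u2). {g. (x, g) \<in> u1 \<and> (g, y) \<in> u2})" for x y
  have decomp: "{g. (x, g) \<in> R1 \<and> (g, y) \<in> R2} = (\<Union>u\<in>U1 \<times> U2. paths x y u)" for x y
    using U1 U2 by (auto simp: paths_def)
  have disj: "paths x y u \<inter> paths x y v = {}"
    if "u \<in> U1 \<times> U2" "v \<in> U1 \<times> U2" "u \<noteq> v" for x y u v
  proof -
    obtain u1 u2 v1 v2 where uv: "u = (u1, u2)" "v = (v1, v2)" by (cases u, cases v) auto
    have "u1 \<inter> v1 = {} \<or> u2 \<inter> v2 = {}"
      using that uv U1(1) U2(1) partition_disjoint[OF part] by blast
    then show ?thesis using uv by (auto simp: paths_def)
  qed
  have fin_paths: "finite (paths x y u)" if "u \<in> U1 \<times> U2" for x y u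
  proof -
    obtain u1 u2 where uu: "u = (u1, u2)" by (cases u) auto
    have "u1 \<in> S" using that uu U1(1) by auto
    then have "paths x y u \<subseteq> \<Omega>" using uu cc_subset[OF cc] by (auto simp: paths_def)
    then show ?thesis using fin\<Omega> finite_subset by blast
  qed
  have count: "card {g. (x, g) \<in> R1 \<and> (g, y) \<in> R2} = (\<Sum>u\<in>U1 \<times> U2. card (paths x y u))" for x y
    unfolding decomp by (rule card_UN_disjoint[OF fin12]) (use fin_paths disj in auto)
  have "card (paths a b u) = card (paths a' b' u)" if "u \<in> U1 \<times> U2" for u
  proof -
    obtain u1 u2 where uu: "u = (u1, u2)" by (cases u) auto
    then show ?thesis using that U1(1) U2(1) cc_card_paths_eq[OF cc _ _ t, of u1 u2]
      by (auto simp: paths_def)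
  qed
  then show ?thesis unfolding count by (rule sum.cong[OF refl])
qed

definition path_count_rel :: "'a set \<Rightarrow> ('a \<times> 'a) set \<Rightarrow> ('a \<times> 'a) set \<Rightarrow> nat \<Rightarrow> ('a \<times> 'a) set"
  where "path_count_rel \<Omega> R1 R2 k = {(x, y) \<in> \<Omega> \<times> \<Omega>. card {g. (x, g) \<in> R1 \<and> (g, y) \<in> R2} = k}"

lemma path_count_rel_in_rels:
  assumes cc: "coherent_configuration \<Omega> S" and R1: "R1 \<in> rels S" and R2: "R2 \<in> rels S"
  shows "path_count_rel \<Omega> R1 R2 k \<in> rels S"
proof (rule rels_intro)
  fix p assume p: "p \<in> path_count_rel \<Omega> R1 R2 k"
  then obtain a b where ab: "p = (a, b)" "(a, b) \<in> \<Omega> \<times> \<Omega>" unfolding path_count_rel_def by auto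
  then obtain t where t: "t \<in> S" "(a, b) \<in> t" using partition_cover[OF cc_partition[OF cc]] by blast
  have "t \<subseteq> path_count_rel \<Omega> R1 R2 k"
  proof
    fix q assume q: "q \<in> t"
    obtain a' b' where q': "q = (a', b')" by (cases q) auto
    have "q \<in> \<Omega> \<times> \<Omega>" using q cc_subset[OF cc t(1)] by blast
    moreover have "card {g. (a', g) \<in> R1 \<and> (g, b') \<in> R2} = k"
      using cc_card_paths_rels_eq[OF cc R1 R2 t(1) t(2) q[unfolded q']] p ab(1)
      unfolding path_count_rel_def by simp
    ultimately show "q \<in> path_count_rel \<Omega> R1 R2 k" using q' unfolding path_count_rel_def by simp
  qed
  then show "\<exists>s\<in>S. p \<in> s \<and> s \<subseteq> path_count_rel \<Omega> R1 R2 k" using t ab(1) by blast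
qed

lemma converse_in_rels:
  assumes cc: "coherent_configuration \<Omega> S" and R: "R \<in> rels S"
  shows "converse R \<in> rels S"
proof -
  obtain U where U: "U \<subseteq> S" "R = \<Union>U" using R unfolding rels_def by auto
  have "converse R = \<Union>(converse ` U)" using U(2) by auto
  moreover have "converse ` U \<subseteq> S" using U(1) cc_converse[OF cc] by auto
  ultimately show ?thesis unfolding rels_def by auto
qed

lemma cc_atoms:
  assumes fin: "finite \<Omega>" and F: "complete_subalgebra (\<Omega> \<times> \<Omega>) F" and Id: "Id_on \<Omega> \<in> F"
    and conv: "\<And>R. R \<in> F \<Longrightarrow> converse R \<in> F"
    and count: "\<And>R1 R2 k. R1 \<in> F \<Longrightarrow> R2 \<in> F \<Longrightarrow> path_count_rel \<Omega> R1 R2 k \<in> F"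
  shows "coherent_configuration \<Omega> (atom F ` (\<Omega> \<times> \<Omega>))"
  unfolding coherent_configuration_def
proof (intro conjI ballI)
  let ?A = "atom F"
  show "finite \<Omega>" by (rule fin)
  show part: "is_partition_of (\<Omega> \<times> \<Omega>) (?A ` (\<Omega> \<times> \<Omega>))" by (rule atoms_partition[OF F])
  show "Id_on \<Omega> \<in> rels (?A ` (\<Omega> \<times> \<Omega>))" using Id rels_atoms[OF F] by simp
next
  let ?A = "atom F"
  fix s assume "s \<in> ?A ` (\<Omega> \<times> \<Omega>)"
  then obtain x y where xy: "(x, y) \<in> \<Omega> \<times> \<Omega>" "s = ?A (x, y)" by auto
  have yx: "(y, x) \<in> \<Omega> \<times> \<Omega>" using xy(1) by auto
  have "?A (y, x) \<subseteq> converse s"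
    using atom_subset[OF F conv[OF atom_in[OF F xy(1)]]] mem_atom[OF F, of "(x, y)"] xy(2) by auto
  moreover have "s \<subseteq> converse (?A (y, x))"
    using atom_subset[OF F conv[OF atom_in[OF F yx]]] mem_atom[OF F, of "(y, x)"] xy(2) by auto
  ultimately have "converse s = ?A (y, x)" by auto
  then show "converse s \<in> ?A ` (\<Omega> \<times> \<Omega>)" using yx by blast
next
  let ?A = "atom F"
  fix r s t assume rst: "r \<in> ?A ` (\<Omega> \<times> \<Omega>)" "s \<in> ?A ` (\<Omega> \<times> \<Omega>)" "t \<in> ?A ` (\<Omega> \<times> \<Omega>)"
  obtain a b where ab: "(a, b) \<in> \<Omega> \<times> \<Omega>" "t = ?A (a, b)" using rst(3) by auto
  have "r \<in> F" "s \<in> F" using rst(1,2) atom_in[OF F] by auto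
  then have level: "path_count_rel \<Omega> r s (card {g. (a, g) \<in> r \<and> (g, b) \<in> s}) \<in> F"
    by (rule count)
  have "(a, b) \<in> path_count_rel \<Omega> r s (card {g. (a, g) \<in> r \<and> (g, b) \<in> s})"
    using ab(1) unfolding path_count_rel_def by simp
  then have "t \<subseteq> path_count_rel \<Omega> r s (card {g. (a, g) \<in> r \<and> (g, b) \<in> s})"
    unfolding ab(2) by (rule atom_subset[OF F level])
  then have "\<forall>(x, y)\<in>t. card {g. (x, g) \<in> r \<and> (g, y) \<in> s} = card {g. (a, g) \<in> r \<and> (g, b) \<in> s}"
    unfolding path_count_rel_def by auto
  then show "\<exists>c. \<forall>(x, y)\<in>t. card {g. (x, g) \<in> r \<and> (g, y) \<in> s} = c" by blast
qed

subsection \<open>Smallest fissions\<close>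

lemma cc_common_rels:
  fixes \<Omega> :: "'a set"
  assumes fin: "finite \<Omega>" and K: "\<And>S. S \<in> K \<Longrightarrow> coherent_configuration \<Omega> S"
  obtains A where "coherent_configuration \<Omega> A" "rels A = Pow (\<Omega> \<times> \<Omega>) \<inter> (\<Inter>S\<in>K. rels S)"
proof
  let ?F = "Pow (\<Omega> \<times> \<Omega>) \<inter> (\<Inter>S\<in>K. rels S)"
  have F: "complete_subalgebra (\<Omega> \<times> \<Omega>) ?F"
    by (rule complete_subalgebra_INT, rule complete_subalgebra_rels, rule cc_partition, rule K)
  have Id: "Id_on \<Omega> \<in> ?F" using cc_Id_on[OF K] by auto
  have conv: "converse R \<in> ?F" if "R \<in> ?F" for R
    using that converse_in_rels[OF K] by auto
  have count: "path_count_rel \<Omega> R1 R2 k \<in> ?F" if "R1 \<in> ?F" "R2 \<in> ?F" for R1 R2 k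
    using that path_count_rel_in_rels[OF K] unfolding path_count_rel_def by auto
  show "coherent_configuration \<Omega> (atom ?F ` (\<Omega> \<times> \<Omega>))" by (rule cc_atoms[OF fin F Id conv count])
  show "rels (atom ?F ` (\<Omega> \<times> \<Omega>)) = ?F" by (rule rels_atoms[OF F])
qed

text \<open>The smallest fission is the coherent configuration whose relations are those common to
  all fissions with the required singleton fibers.\<close>

lemma smallest_fission_singleton_fibers:
  fixes \<Omega> :: "'a set" and S :: "('a \<times> 'a) set set"
  assumes fin: "finite \<Omega>" and S: "\<Union>S \<subseteq> \<Omega> \<times> \<Omega>" and B: "B \<subseteq> \<Omega>"
  shows "fission \<Omega> (smallest_fission \<Omega> S (\<lambda>S'. \<forall>b\<in>B. is_fiber S' {b})) S"
    and "\<forall>b\<in>B. is_fiber (smallest_fission \<Omega> S (\<lambda>S'. \<forall>b\<in>B. is_fiber S' {b})) {b}"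
proof -
  define P where "P = (\<lambda>S' :: ('a \<times> 'a) set set. \<forall>b\<in>B. is_fiber S' {b})"
  define K where "K = {S'. fission \<Omega> S' S \<and> P S'}"
  define F where "F = Pow (\<Omega> \<times> \<Omega>) \<inter> (\<Inter>S'\<in>K. rels S')"
  obtain A where ccA: "coherent_configuration \<Omega> A" and relsA: "rels A = F"
    using cc_common_rels[OF fin, of K] unfolding K_def fission_def F_def by blast
  have fissionA: "fission \<Omega> A S"
    unfolding fission_def
  proof (intro conjI ccA subsetI)
    fix R assume R: "R \<in> rels S"
    then have "R \<subseteq> \<Omega> \<times> \<Omega>" using S unfolding rels_def by auto
    moreover have "R \<in> rels S'" if "S' \<in> K" for S' using R that unfolding K_def fission_def by auto
    ultimately show "R \<in> rels A" unfolding relsA F_def by auto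
  qed
  have PA: "P A"
    unfolding P_def is_fiber_def
  proof
    fix b assume b: "b \<in> B"
    then have bb: "(b, b) \<in> \<Omega> \<times> \<Omega>" using B by auto
    have "Id_on {b} \<in> rels S'" if "S' \<in> K" for S'
      using that b rels_basic unfolding K_def P_def is_fiber_def by auto
    then have "{(b, b)} \<in> rels A" unfolding relsA F_def using bb by auto
    then show "Id_on {b} \<in> A" using singleton_basic_if_rels[OF cc_partition[OF ccA]] by simp
  qed
  have minimal: "rels A \<subseteq> rels S'" if "fission \<Omega> S' S" "P S'" for S'
    using that unfolding relsA F_def K_def by auto
  have "smallest_fission \<Omega> S P = A"
    unfolding smallest_fission_def
  proof (rule the_equality)
    show "fission \<Omega> A S \<and> P A \<and> (\<forall>S'. fission \<Omega> S' S \<and> P S' \<longrightarrow> rels A \<subseteq> rels S')"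
      using fissionA PA minimal by blast
    fix X assume X: "fission \<Omega> X S \<and> P X \<and> (\<forall>S'. fission \<Omega> S' S \<and> P S' \<longrightarrow> rels X \<subseteq> rels S')"
    then have "rels X = rels A" using fissionA PA minimal by (simp add: subset_antisym)
    moreover have "is_partition_of (\<Omega> \<times> \<Omega>) X" using X cc_partition unfolding fission_def by blast
    ultimately show "X = A" using partition_eq_if_rels_eq cc_partition[OF ccA] by blast
  qed
  then show "fission \<Omega> (smallest_fission \<Omega> S (\<lambda>S'. \<forall>b\<in>B. is_fiber S' {b})) S"
    and "\<forall>b\<in>B. is_fiber (smallest_fission \<Omega> S (\<lambda>S'. \<forall>b\<in>B. is_fiber S' {b})) {b}"
    using fissionA PA unfolding P_def by simp_all
qed

lemma point_extension_fission:
  assumes "finite \<Omega>" "\<Union>S \<subseteq> \<Omega> \<times> \<Omega>" "\<alpha> \<in> \<Omega>"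
  shows "fission \<Omega> (point_extension \<Omega> S \<alpha>) S" and "is_fiber (point_extension \<Omega> S \<alpha>) {\<alpha>}"
  using smallest_fission_singleton_fibers[of \<Omega> S "{\<alpha>}"] assms
  unfolding point_extension_def by simp_all

subsection \<open>Fibers\<close>

lemma cc_fiber_fst:
  assumes cc: "coherent_configuration \<Omega> S" and s: "s \<in> S" "(a, b) \<in> s" "(a', b') \<in> s"
    and Y: "Id_on Y \<in> S" "a \<in> Y"
  shows "a' \<in> Y"
proof -
  have "card {g. (a, g) \<in> Id_on Y \<and> (g, b) \<in> s} = card {g. (a', g) \<in> Id_on Y \<and> (g, b') \<in> s}"
    by (rule cc_card_paths_eq[OF cc Y(1) s(1) s(1) s(2) s(3)])
  moreover have "{g. (a, g) \<in> Id_on Y \<and> (g, b) \<in> s} = {a}" using Y s by auto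
  moreover have "{g. (a', g) \<in> Id_on Y \<and> (g, b') \<in> s} = {}" if "a' \<notin> Y" using that by auto
  ultimately show ?thesis by (cases "a' \<in> Y") simp_all
qed

lemma cc_fiber_snd:
  assumes cc: "coherent_configuration \<Omega> S" and s: "s \<in> S" "(a, b) \<in> s" "(a', b') \<in> s"
    and Y: "Id_on Y \<in> S" "b \<in> Y"
  shows "b' \<in> Y"
proof -
  have "card {g. (a, g) \<in> s \<and> (g, b) \<in> Id_on Y} = card {g. (a', g) \<in> s \<and> (g, b') \<in> Id_on Y}"
    by (rule cc_card_paths_eq[OF cc s(1) Y(1) s(1) s(2) s(3)])
  moreover have "{g. (a, g) \<in> s \<and> (g, b) \<in> Id_on Y} = {b}" using Y s by auto
  moreover have "{g. (a', g) \<in> s \<and> (g, b') \<in> Id_on Y} = {}" if "b' \<notin> Y" using that by auto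
  ultimately show ?thesis by (cases "b' \<in> Y") simp_all
qed

lemma cc_obtain_fiber:
  assumes cc: "coherent_configuration \<Omega> S" and x: "x \<in> \<Omega>"
  obtains X where "Id_on X \<in> S" "x \<in> X" "X \<subseteq> \<Omega>"
proof -
  obtain w where w: "w \<in> S" "(x, x) \<in> w" "w \<subseteq> Id_on \<Omega>"
    using rels_obtain_basic[OF cc_partition[OF cc] cc_Id_on[OF cc], of "(x, x)"] x by auto
  have "w = Id_on {y. (y, y) \<in> w}" using w(3) by auto
  moreover have "{y. (y, y) \<in> w} \<subseteq> \<Omega>" using w(3) by auto
  moreover have "x \<in> {y. (y, y) \<in> w}" using w(2) by simp
  ultimately show ?thesis using that w(1) by metis
qed

lemma fission_singleton_fiber:
  assumes fission: "fission \<Omega> S' S" and fiber: "is_fiber S {a}"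
  shows "is_fiber S' {a}"
proof -
  have "{(a, a)} \<in> rels S'" using fission fiber rels_basic unfolding fission_def is_fiber_def by auto
  moreover have "is_partition_of (\<Omega> \<times> \<Omega>) S'" using fission cc_partition unfolding fission_def by blast
  ultimately show ?thesis using singleton_basic_if_rels unfolding is_fiber_def by simp
qed

lemma complete_cc_if_singleton_fibers:
  assumes cc: "coherent_configuration \<Omega> S" and F: "\<forall>x\<in>\<Omega>. Id_on {x} \<in> S"
  shows "complete_cc \<Omega> S"
  unfolding complete_cc_def
proof (intro conjI ballI cc)
  fix s assume s: "s \<in> S"
  obtain a b where ab: "(a, b) \<in> s" using partition_nonempty[OF cc_partition[OF cc] s] by auto
  have "a \<in> \<Omega>" "b \<in> \<Omega>" using cc_subset[OF cc s] ab by auto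
  have "q = (a, b)" if q: "q \<in> s" for q
  proof -
    obtain a' b' where q': "q = (a', b')" by (cases q) auto
    have "a' \<in> {a}" using cc_fiber_fst[OF cc s ab q[unfolded q']] F \<open>a \<in> \<Omega>\<close> by blast
    moreover have "b' \<in> {b}" using cc_fiber_snd[OF cc s ab q[unfolded q']] F \<open>b \<in> \<Omega>\<close> by blast
    ultimately show ?thesis using q' by simp
  qed
  then have "s = {(a, b)}" using ab by blast
  then show "card s = 1" by simp
qed

text \<open>Points of one fiber cannot be told apart by their relations to a point forming a
  singleton fiber: count the paths \<open>a \<rightarrow> b \<rightarrow> a\<close> through the basic relation of \<open>(a, b)\<close>.\<close>

lemma rels_to_singleton_fiber:
  assumes cc: "coherent_configuration \<Omega> S" and R: "R \<in> rels S"
    and b: "Id_on {b} \<in> S" and X: "Id_on X \<in> S" "a \<in> X" "a' \<in> X" and ab: "(a, b) \<in> R"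
  shows "(a', b) \<in> R"
proof -
  obtain v where v: "v \<in> S" "(a, b) \<in> v" "v \<subseteq> R"
    using rels_obtain_basic[OF cc_partition[OF cc] R ab] by blast
  have eq: "card {g. (a, g) \<in> v \<and> (g, a) \<in> converse v} = card {g. (a', g) \<in> v \<and> (g, a') \<in> converse v}"
    by (rule cc_card_paths_eq[OF cc v(1) cc_converse[OF cc v(1)] X(1)]) (use X in auto)
  have "{g. (a, g) \<in> v \<and> (g, a) \<in> converse v} \<subseteq> \<Omega>" using cc_subset[OF cc v(1)] by auto
  then have "finite {g. (a, g) \<in> v \<and> (g, a) \<in> converse v}" using cc_finite[OF cc] finite_subset by blast
  moreover have "b \<in> {g. (a, g) \<in> v \<and> (g, a) \<in> converse v}" using v by auto
  ultimately have "{g. (a', g) \<in> v \<and> (g, a') \<in> converse v} \<noteq> {}" using eq by fastforce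
  then obtain g where g: "(a', g) \<in> v" by auto
  have "g \<in> {b}" by (rule cc_fiber_snd[OF cc v(1) v(2) g b]) simp
  then show ?thesis using g v by auto
qed

lemma rels_from_singleton_fiber:
  assumes cc: "coherent_configuration \<Omega> S" and R: "R \<in> rels S"
    and b: "Id_on {b} \<in> S" and X: "Id_on X \<in> S" "a \<in> X" "a' \<in> X" and ba: "(b, a) \<in> R"
  shows "(b, a') \<in> R"
  using rels_to_singleton_fiber[OF cc converse_in_rels[OF cc R] b X] ba by simp

lemma singleton_fibers_if_separated:
  fixes D :: "int \<Rightarrow> ('a \<times> 'a) set" and dist :: "'a \<Rightarrow> 'a \<Rightarrow> nat"
  assumes cc: "coherent_configuration \<Omega> S" and \<alpha>: "\<alpha> \<in> \<Omega>" "Id_on {\<alpha>} \<in> S"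
    and B: "\<forall>\<beta>\<in>B. Id_on {\<beta>} \<in> S"
    and D_rels: "\<And>k. D k \<in> rels S"
    and D: "\<And>x y k. (x, y) \<in> D k \<longleftrightarrow> x \<in> \<Omega> \<and> y \<in> \<Omega> \<and> int (dist x y) = k"
    and inj: "inj_on (\<lambda>\<gamma>. D (int (dist \<alpha> \<gamma>) - 1) `` {\<gamma>} \<inter> B) \<Omega>"
  shows "\<forall>\<gamma>\<in>\<Omega>. Id_on {\<gamma>} \<in> S"
proof
  fix \<gamma> assume \<gamma>: "\<gamma> \<in> \<Omega>"
  obtain X where X: "Id_on X \<in> S" "\<gamma> \<in> X" "X \<subseteq> \<Omega>" using cc_obtain_fiber[OF cc \<gamma>] .
  have "\<delta> = \<gamma>" if \<delta>: "\<delta> \<in> X" for \<delta>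
  proof -
    let ?k = "int (dist \<alpha> \<gamma>)"
    have "(\<alpha>, \<delta>) \<in> D ?k"
      by (rule rels_from_singleton_fiber[OF cc D_rels \<alpha>(2) X(1,2) \<delta>]) (use D \<alpha> \<gamma> in simp)
    then have same_dist: "dist \<alpha> \<delta> = dist \<alpha> \<gamma>" using D by simp
    have "(\<delta>, \<beta>) \<in> D (?k - 1) \<longleftrightarrow> (\<gamma>, \<beta>) \<in> D (?k - 1)" if "\<beta> \<in> B" for \<beta>
      using rels_to_singleton_fiber[OF cc D_rels _ X(1)] B that \<delta> X(2) by blast
    then have "D (int (dist \<alpha> \<delta>) - 1) `` {\<delta>} \<inter> B = D (int (dist \<alpha> \<gamma>) - 1) `` {\<gamma>} \<inter> B"
      using same_dist by auto
    then show ?thesis using inj_onD[OF inj] \<delta> X(3) \<gamma> by auto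
  qed
  then have "X = {\<gamma>}" using X(2) by blast
  then show "Id_on {\<gamma>} \<in> S" using X(1) by simp
qed

lemma cart_powerI: "length a = m \<Longrightarrow> (\<And>i. i < m \<Longrightarrow> a ! i \<in> \<Gamma>) \<Longrightarrow> a \<in> cart_power \<Gamma> m"
  unfolding cart_power_def by (auto simp: in_set_conv_nth)

lemma cart_powerD: "a \<in> cart_power \<Gamma> m \<Longrightarrow> i < m \<Longrightarrow> a ! i \<in> \<Gamma>"
  unfolding cart_power_def by auto

lemma length_cart_power: "a \<in> cart_power \<Gamma> m \<Longrightarrow> length a = m"
  unfolding cart_power_def by auto

lemma finite_cart_power: "finite \<Gamma> \<Longrightarrow> finite (cart_power \<Gamma> m)"
  unfolding cart_power_def using finite_lists_length_eq by (simp add: conj_commute)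

lemma dist_rel_iff:
  "(x, y) \<in> dist_rel \<Gamma> m k \<longleftrightarrow> x \<in> cart_power \<Gamma> m \<and> y \<in> cart_power \<Gamma> m \<and> int (hdist m x y) = k"
  unfolding dist_rel_def by auto

lemma length_perm_pt [simp]: "length (perm_pt l a) = length a"
  unfolding perm_pt_def by simp

lemma nth_perm_pt: "j < length a \<Longrightarrow> perm_pt l a ! j = a ! inv l j"
  unfolding perm_pt_def by simp

lemma perm_pt_id [simp]: "perm_pt id a = a"
  unfolding perm_pt_def by (simp add: inv_id map_nth)

lemma permutes_inv_less:
  fixes l :: "nat \<Rightarrow> nat"
  assumes "l permutes {0..<m}" "j < m" shows "inv l j < m"
proof -
  have "inv l j \<in> {0..<m} \<longleftrightarrow> j \<in> {0..<m}" by (rule permutes_in_image[OF permutes_inv[OF assms(1)]])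
  then show ?thesis using assms(2) by simp
qed

lemma perm_pt_cart_power:
  assumes l: "l permutes {0..<m}" and a: "a \<in> cart_power \<Gamma> m"
  shows "perm_pt l a \<in> cart_power \<Gamma> m"
proof (rule cart_powerI)
  show "length (perm_pt l a) = m" using length_cart_power[OF a] by simp
  fix j assume j: "j < m"
  have "perm_pt l a ! j = a ! inv l j" using nth_perm_pt[of j a l] length_cart_power[OF a] j by simp
  then show "perm_pt l a ! j \<in> \<Gamma>" using cart_powerD[OF a permutes_inv_less[OF l j]] by simp
qed

lemma hdist_perm_pt:
  assumes l: "l permutes {0..<m}" and a: "length a = m" and b: "length b = m"
  shows "hdist m (perm_pt l a) (perm_pt l b) = hdist m a b"
proof -
  have "{j. j < m \<and> perm_pt l a ! j \<noteq> perm_pt l b ! j} = l ` {i. i < m \<and> a ! i \<noteq> b ! i}"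
  proof (rule set_eqI)
    fix j
    show "j \<in> {j. j < m \<and> perm_pt l a ! j \<noteq> perm_pt l b ! j} \<longleftrightarrow>
        j \<in> l ` {i. i < m \<and> a ! i \<noteq> b ! i}"
    proof
      assume "j \<in> {j. j < m \<and> perm_pt l a ! j \<noteq> perm_pt l b ! j}"
      then have "j < m" "a ! inv l j \<noteq> b ! inv l j"
        using a b nth_perm_pt[of j a l] nth_perm_pt[of j b l] by auto
      moreover have "l (inv l j) = j" using permutes_inverses(1)[OF l] .
      ultimately show "j \<in> l ` {i. i < m \<and> a ! i \<noteq> b ! i}"
        using permutes_inv_less[OF l] by (metis (mono_tags, lifting) image_eqI mem_Collect_eq)
    next
      assume "j \<in> l ` {i. i < m \<and> a ! i \<noteq> b ! i}"
      then obtain i where i: "i < m" "a ! i \<noteq> b ! i" "j = l i" by auto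
      have "j < m" using permutes_in_image[OF l, of i] i by simp
      moreover have "inv l j = i" using permutes_inverses(2)[OF l] i(3) by simp
      ultimately show "j \<in> {j. j < m \<and> perm_pt l a ! j \<noteq> perm_pt l b ! j}"
        using i(2) a b nth_perm_pt[of j a l] nth_perm_pt[of j b l] by auto
    qed
  qed
  moreover have "inj_on l {i. i < m \<and> a ! i \<noteq> b ! i}"
    using permutes_inj[OF l] by (rule inj_on_subset) simp
  ultimately show ?thesis unfolding hdist_def by (simp add: card_image)
qed

subsection \<open>Exponentiation\<close>

lemma tensorD: "(a, b) \<in> tensor m ts \<Longrightarrow> i < m \<Longrightarrow> (a ! i, b ! i) \<in> ts ! i"
  unfolding tensor_def by auto

lemma length_tensor: "(a, b) \<in> tensor m ts \<Longrightarrow> length a = m \<and> length b = m"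
  unfolding tensor_def by auto

lemma tensor_cart_power:
  assumes cc: "coherent_configuration \<Gamma> T" and ts: "length ts = m" "set ts \<subseteq> T"
    and ab: "(a, b) \<in> tensor m ts"
  shows "a \<in> cart_power \<Gamma> m" "b \<in> cart_power \<Gamma> m"
proof -
  have "(a ! i, b ! i) \<in> \<Gamma> \<times> \<Gamma>" if "i < m" for i
  proof -
    have "ts ! i \<in> T" using ts that nth_mem by blast
    then show ?thesis using cc_subset[OF cc] tensorD[OF ab that] by blast
  qed
  then show "a \<in> cart_power \<Gamma> m" "b \<in> cart_power \<Gamma> m"
    using length_tensor[OF ab] cart_powerI[of a m \<Gamma>] cart_powerI[of b m \<Gamma>] by auto
qed

text \<open>Each basic relation of \<open>\<Y>\<close> lies inside or outside the diagonal, so a tensor product of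
  basic relations fixes the set of coordinates in which the two points differ.\<close>

lemma hdist_tensor_eq:
  assumes cc: "coherent_configuration \<Gamma> T" and ts: "length ts = m" "set ts \<subseteq> T"
    and ab: "(a, b) \<in> tensor m ts" and ab': "(a', b') \<in> tensor m ts"
  shows "hdist m a b = hdist m a' b'"
proof -
  have "a ! i \<noteq> b ! i \<longleftrightarrow> a' ! i \<noteq> b' ! i" if i: "i < m" for i
  proof -
    have t: "ts ! i \<in> T" using ts i nth_mem by blast
    have in_t: "(a ! i, b ! i) \<in> ts ! i" "(a' ! i, b' ! i) \<in> ts ! i"
      using tensorD[OF ab i] tensorD[OF ab' i] by auto
    show ?thesis
    proof (cases "ts ! i \<inter> Id_on \<Gamma> = {}")
      case True
      have "x \<noteq> y" if "(x, y) \<in> ts ! i" for x y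
      proof
        assume "x = y"
        then have "(x, y) \<in> Id_on \<Gamma>" using that cc_subset[OF cc t] by auto
        then show False using that True by auto
      qed
      then show ?thesis using in_t by simp
    next
      case False
      then have "ts ! i \<subseteq> Id_on \<Gamma>" by (rule cc_basic_subset_Id_on[OF cc t])
      then have "a ! i = b ! i" "a' ! i = b' ! i" using in_t by auto
      then show ?thesis by simp
    qed
  qed
  then have "{i. i < m \<and> a ! i \<noteq> b ! i} = {i. i < m \<and> a' ! i \<noteq> b' ! i}" by auto
  then show ?thesis unfolding hdist_def by simp
qed

lemma exp_rels_obtain:
  assumes "p \<in> s" "s \<in> exp_rels T m L"
  obtains ts l a b where "length ts = m" "set ts \<subseteq> T" "l \<in> L" "(a, b) \<in> tensor m ts"
    "p = (perm_pt l a, perm_pt l b)"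
proof -
  obtain ts where ts: "length ts = m" "set ts \<subseteq> T" "s = (\<Union>l\<in>L. perm_rel l (tensor m ts))"
    using assms(2) unfolding exp_rels_def by blast
  then obtain l where l: "l \<in> L" "p \<in> perm_rel l (tensor m ts)" using assms(1) by blast
  then obtain a b where "(a, b) \<in> tensor m ts" "p = (perm_pt l a, perm_pt l b)"
    unfolding perm_rel_def by auto
  then show ?thesis using that ts l by blast
qed

lemma exp_rels_subset:
  assumes cc: "coherent_configuration \<Gamma> T" and L: "perm_group_on {0..<m} L"
  shows "\<Union>(exp_rels T m L) \<subseteq> cart_power \<Gamma> m \<times> cart_power \<Gamma> m"
proof
  fix p assume "p \<in> \<Union>(exp_rels T m L)"
  then obtain s where "p \<in> s" "s \<in> exp_rels T m L" by blast
  then obtain ts l a b where ts: "length ts = m" "set ts \<subseteq> T" and l: "l \<in> L"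
    and ab: "(a, b) \<in> tensor m ts" and p: "p = (perm_pt l a, perm_pt l b)"
    by (rule exp_rels_obtain)
  have "l permutes {0..<m}" using L l unfolding perm_group_on_def by auto
  then show "p \<in> cart_power \<Gamma> m \<times> cart_power \<Gamma> m"
    using p perm_pt_cart_power tensor_cart_power[OF cc ts ab] by auto
qed

lemma tensor_cover:
  assumes cc: "coherent_configuration \<Gamma> T" and a: "a \<in> cart_power \<Gamma> m" and b: "b \<in> cart_power \<Gamma> m"
  obtains ts where "length ts = m" "set ts \<subseteq> T" "(a, b) \<in> tensor m ts"
proof -
  have "\<exists>t. t \<in> T \<and> (a ! i, b ! i) \<in> t" if i: "i < m" for i
  proof -
    have "(a ! i, b ! i) \<in> \<Gamma> \<times> \<Gamma>" using cart_powerD[OF a i] cart_powerD[OF b i] by simp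
    then show ?thesis using partition_cover[OF cc_partition[OF cc]] by blast
  qed
  then have ex: "\<And>i. i < m \<Longrightarrow> \<exists>t. t \<in> T \<and> (a ! i, b ! i) \<in> t" .
  define ts where "ts = map (\<lambda>i. SOME t. t \<in> T \<and> (a ! i, b ! i) \<in> t) [0..<m]"
  have ts: "length ts = m" "\<And>i. i < m \<Longrightarrow> ts ! i \<in> T \<and> (a ! i, b ! i) \<in> ts ! i"
    unfolding ts_def using someI_ex[OF ex] by simp_all
  have "set ts \<subseteq> T" using ts by (auto simp: in_set_conv_nth)
  moreover have "(a, b) \<in> tensor m ts"
    unfolding tensor_def using length_cart_power[OF a] length_cart_power[OF b] ts by simp
  ultimately show ?thesis using that ts(1) by blast
qed

text \<open>The distance relations are relations of \<open>\<Y> \<up> L\<close>: the basic relation containing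
  \<open>(a, b)\<close> is the \<open>L\<close>-orbit of the tensor product of the basic relations containing the
  coordinate pairs, and both tensoring and permuting coordinates preserve the distance.\<close>

lemma dist_rel_in_rels_exp_rels:
  assumes cc: "coherent_configuration \<Gamma> T" and L: "perm_group_on {0..<m} L"
  shows "dist_rel \<Gamma> m k \<in> rels (exp_rels T m L)"
proof (rule rels_intro)
  fix p assume p: "p \<in> dist_rel \<Gamma> m k"
  then obtain a b where ab: "p = (a, b)" "a \<in> cart_power \<Gamma> m" "b \<in> cart_power \<Gamma> m"
    "int (hdist m a b) = k"
    unfolding dist_rel_def by (auto split: if_splits)
  obtain ts where ts: "length ts = m" "set ts \<subseteq> T" and ab_ts: "(a, b) \<in> tensor m ts"
    using tensor_cover[OF cc ab(2,3)] .
  let ?s = "\<Union>l\<in>L. perm_rel l (tensor m ts)"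
  have "?s \<in> exp_rels T m L" unfolding exp_rels_def using ts by auto
  moreover have "p \<in> ?s"
  proof -
    have "id \<in> L" using L unfolding perm_group_on_def by auto
    moreover have "p \<in> perm_rel id (tensor m ts)"
      using ab_ts ab(1) unfolding perm_rel_def by (auto intro: image_eqI[where x = "(a, b)"])
    ultimately show ?thesis by auto
  qed
  moreover have "?s \<subseteq> dist_rel \<Gamma> m k"
  proof
    fix q assume "q \<in> ?s"
    then obtain l a' b' where l: "l \<in> L" and ab': "(a', b') \<in> tensor m ts"
      and q: "q = (perm_pt l a', perm_pt l b')"
      unfolding perm_rel_def by auto
    have lp: "l permutes {0..<m}" using L l unfolding perm_group_on_def by auto
    have c: "a' \<in> cart_power \<Gamma> m" "b' \<in> cart_power \<Gamma> m"
      using tensor_cart_power[OF cc ts ab'] by auto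
    have "hdist m (perm_pt l a') (perm_pt l b') = hdist m a' b'"
      using hdist_perm_pt[OF lp length_cart_power[OF c(1)] length_cart_power[OF c(2)]] .
    also have "\<dots> = hdist m a b" using hdist_tensor_eq[OF cc ts ab' ab_ts] .
    finally show "q \<in> dist_rel \<Gamma> m k"
      using q ab(4) perm_pt_cart_power[OF lp c(1)] perm_pt_cart_power[OF lp c(2)]
      by (simp add: dist_rel_iff)
  qed
  ultimately show "\<exists>s\<in>exp_rels T m L. p \<in> s \<and> s \<subseteq> dist_rel \<Gamma> m k" by (intro bexI conjI)
qed

subsection \<open>Neighbours of a constant point\<close>

lemma nth_replicate_update: "i < m \<Longrightarrow> (replicate m g)[j := x] ! i = (if i = j then x else g)"
  by (simp add: nth_list_update)

lemma hdist_replicate: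
  "length \<beta> = m \<Longrightarrow> hdist m (replicate m g) \<beta> = card {i. i < m \<and> \<beta> ! i \<noteq> g}"
  unfolding hdist_def by (rule arg_cong[where f = card]) auto

lemma replicate_cart_power: "g \<in> \<Gamma> \<Longrightarrow> replicate m g \<in> cart_power \<Gamma> m"
  by (rule cart_powerI) auto

lemma replicate_update_cart_power:
  "j < m \<Longrightarrow> x \<in> \<Gamma> \<Longrightarrow> g \<in> \<Gamma> \<Longrightarrow> (replicate m g)[j := x] \<in> cart_power \<Gamma> m"
  by (rule cart_powerI) (auto simp: nth_list_update)

lemma neighbour_of_replicate_iff:
  assumes g: "g \<in> \<Gamma>"
  shows "\<delta> \<in> dist_rel \<Gamma> m 1 `` {replicate m g} \<longleftrightarrow>
    (\<exists>j<m. \<exists>x\<in>\<Gamma>. x \<noteq> g \<and> \<delta> = (replicate m g)[j := x])"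
proof
  assume "\<delta> \<in> dist_rel \<Gamma> m 1 `` {replicate m g}"
  then have \<delta>: "\<delta> \<in> cart_power \<Gamma> m" "hdist m (replicate m g) \<delta> = 1" by (simp_all add: dist_rel_iff)
  have len: "length \<delta> = m" using length_cart_power[OF \<delta>(1)] .
  have "card {i. i < m \<and> \<delta> ! i \<noteq> g} = 1" using \<delta>(2) hdist_replicate[OF len] by simp
  then obtain j where j: "{i. i < m \<and> \<delta> ! i \<noteq> g} = {j}" by (metis card_1_singletonE)
  then have jm: "j < m" "\<delta> ! j \<noteq> g" by auto
  have "\<delta> = (replicate m g)[j := \<delta> ! j]"
  proof (rule nth_equalityI)
    show "length \<delta> = length ((replicate m g)[j := \<delta> ! j])" using len by simp
    fix i assume "i < length \<delta>"
    then have i: "i < m" using len by simp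
    show "\<delta> ! i = (replicate m g)[j := \<delta> ! j] ! i"
    proof (cases "i = j")
      case False
      then have "\<delta> ! i = g" using i j by blast
      then show ?thesis using i False by (simp add: nth_list_update)
    qed (use i in \<open>simp add: nth_list_update\<close>)
  qed
  then show "\<exists>j<m. \<exists>x\<in>\<Gamma>. x \<noteq> g \<and> \<delta> = (replicate m g)[j := x]"
    using jm cart_powerD[OF \<delta>(1) jm(1)] by blast
next
  assume "\<exists>j<m. \<exists>x\<in>\<Gamma>. x \<noteq> g \<and> \<delta> = (replicate m g)[j := x]"
  then obtain j x where jx: "j < m" "x \<in> \<Gamma>" "x \<noteq> g" "\<delta> = (replicate m g)[j := x]" by blast
  have \<delta>: "\<delta> \<in> cart_power \<Gamma> m" using replicate_update_cart_power[OF jx(1,2) g] jx(4) by simp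
  have "{i. i < m \<and> \<delta> ! i \<noteq> g} = {j}" using jx by (auto simp: nth_list_update)
  then have "hdist m (replicate m g) \<delta> = 1" using hdist_replicate[OF length_cart_power[OF \<delta>]] by simp
  then show "\<delta> \<in> dist_rel \<Gamma> m 1 `` {replicate m g}"
    using \<delta> replicate_cart_power[OF g] by (simp add: dist_rel_iff)
qed

lemma hdist_replicate_update_eq_pred_iff:
  assumes \<beta>: "\<beta> \<in> cart_power \<Gamma> m" and j: "j < m" and x: "x \<noteq> g"
  shows "int (hdist m \<beta> ((replicate m g)[j := x])) = int (card {i. i < m \<and> \<beta> ! i \<noteq> g}) - 1
     \<longleftrightarrow> \<beta> ! j \<noteq> g \<and> x = \<beta> ! j"
proof -
  define E where "E = {i. i < m \<and> \<beta> ! i \<noteq> (replicate m g)[j := x] ! i}"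
  define supp where "supp = {i. i < m \<and> \<beta> ! i \<noteq> g}"
  have fin: "finite supp" "finite E" unfolding supp_def E_def by simp_all
  have hE: "hdist m \<beta> ((replicate m g)[j := x]) = card E" unfolding hdist_def E_def by simp
  show ?thesis
  proof (cases "x = \<beta> ! j")
    case True
    then have "E = supp - {j}" unfolding E_def supp_def using j by (auto simp: nth_list_update)
    moreover have "j \<in> supp" unfolding supp_def using j x True by simp
    ultimately have "card E = card supp - 1" "card supp > 0" using fin
      by (simp_all add: card_gt_0_iff) blast
    then show ?thesis using hE True x unfolding supp_def by simp
  next
    case False
    then have "supp \<subseteq> E" unfolding E_def supp_def using j by (auto simp: nth_list_update)
    then have "card supp \<le> card E" using fin(2) by (rule card_mono[rotated])
    then show ?thesis using hE False unfolding supp_def by simp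
  qed
qed

text \<open>The map \<open>\<rho>\<close> of the theorem, for \<open>\<alpha> = replicate m g\<close>: the neighbours of \<open>\<alpha>\<close> lying on
  a geodesic from \<open>\<alpha>\<close> to \<open>\<beta>\<close>.\<close>

definition geodesic_neighbours :: "'a set \<Rightarrow> nat \<Rightarrow> 'a \<Rightarrow> 'a list \<Rightarrow> 'a list set" where
  "geodesic_neighbours \<Gamma> m g \<beta> =
     dist_rel \<Gamma> m (int (hdist m (replicate m g) \<beta>) - 1) `` {\<beta>} \<inter> dist_rel \<Gamma> m 1 `` {replicate m g}"

lemma geodesic_neighbours_eq:
  assumes \<beta>: "\<beta> \<in> cart_power \<Gamma> m" and g: "g \<in> \<Gamma>"
  shows "geodesic_neighbours \<Gamma> m g \<beta> = {(replicate m g)[j := \<beta> ! j] | j. j < m \<and> \<beta> ! j \<noteq> g}"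
proof -
  have h\<beta>: "hdist m (replicate m g) \<beta> = card {i. i < m \<and> \<beta> ! i \<noteq> g}"
    using hdist_replicate[OF length_cart_power[OF \<beta>]] .
  have "\<delta> \<in> geodesic_neighbours \<Gamma> m g \<beta> \<longleftrightarrow> (\<exists>j. j < m \<and> \<beta> ! j \<noteq> g \<and> \<delta> = (replicate m g)[j := \<beta> ! j])"
    for \<delta>
  proof -
    have "\<delta> \<in> geodesic_neighbours \<Gamma> m g \<beta> \<longleftrightarrow> (\<exists>j<m. \<exists>x\<in>\<Gamma>. x \<noteq> g \<and> \<delta> = (replicate m g)[j := x] \<and>
        int (hdist m \<beta> \<delta>) = int (card {i. i < m \<and> \<beta> ! i \<noteq> g}) - 1)"
      unfolding geodesic_neighbours_def using neighbour_of_replicate_iff[OF g, of \<delta> m] \<beta> h\<beta>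
      by (auto simp: dist_rel_iff)
    also have "\<dots> \<longleftrightarrow> (\<exists>j. j < m \<and> \<beta> ! j \<noteq> g \<and> \<delta> = (replicate m g)[j := \<beta> ! j])"
      using hdist_replicate_update_eq_pred_iff[OF \<beta>] cart_powerD[OF \<beta>] by blast
    finally show ?thesis .
  qed
  then show ?thesis by blast
qed

lemma inj_on_geodesic_neighbours:
  assumes g: "g \<in> \<Gamma>"
  shows "inj_on (geodesic_neighbours \<Gamma> m g) (cart_power \<Gamma> m)"
proof (rule inj_onI)
  fix \<beta> \<beta>' assume \<beta>: "\<beta> \<in> cart_power \<Gamma> m" and \<beta>': "\<beta>' \<in> cart_power \<Gamma> m"
    and eq: "geodesic_neighbours \<Gamma> m g \<beta> = geodesic_neighbours \<Gamma> m g \<beta>'"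
  have entry: "\<gamma> ! j = \<gamma>' ! j"
    if "{(replicate m g)[j := \<gamma> ! j] | j. j < m \<and> \<gamma> ! j \<noteq> g} =
        {(replicate m g)[j := \<gamma>' ! j] | j. j < m \<and> \<gamma>' ! j \<noteq> g}"
      and j: "j < m" "\<gamma>' ! j \<noteq> g" for \<gamma> \<gamma>' j
  proof -
    have "(replicate m g)[j := \<gamma>' ! j] \<in> {(replicate m g)[j := \<gamma>' ! j] | j. j < m \<and> \<gamma>' ! j \<noteq> g}"
      using j by blast
    then have "(replicate m g)[j := \<gamma>' ! j] \<in> {(replicate m g)[j := \<gamma> ! j] | j. j < m \<and> \<gamma> ! j \<noteq> g}"
      using that(1) by simp
    then obtain i where i: "i < m" "\<gamma> ! i \<noteq> g" "(replicate m g)[j := \<gamma>' ! j] = (replicate m g)[i := \<gamma> ! i]"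
      by blast
    have "\<gamma>' ! j = (replicate m g)[j := \<gamma>' ! j] ! j" using j(1) by simp
    also have "\<dots> = (replicate m g)[i := \<gamma> ! i] ! j" using i(3) by simp
    finally have "\<gamma>' ! j = (replicate m g)[i := \<gamma> ! i] ! j" .
    then show ?thesis using j(2) nth_replicate_update[OF j(1), of g i "\<gamma> ! i"] by (auto split: if_splits)
  qed
  show "\<beta> = \<beta>'"
  proof (rule nth_equalityI)
    show "length \<beta> = length \<beta>'" using length_cart_power[OF \<beta>] length_cart_power[OF \<beta>'] by simp
    fix j assume "j < length \<beta>"
    then have "j < m" using length_cart_power[OF \<beta>] by simp
    then show "\<beta> ! j = \<beta>' ! j"
      using entry[of \<beta> \<beta>' j] entry[of \<beta>' \<beta> j] eq
      unfolding geodesic_neighbours_eq[OF \<beta> g] geodesic_neighbours_eq[OF \<beta>' g] by metis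
  qed
qed

lemma geodesic_neighbours_coordinate:
  assumes \<beta>: "\<beta> \<in> cart_power \<Gamma> m" and g: "g \<in> \<Gamma>" and i: "i < m"
  shows "geodesic_neighbours \<Gamma> m g \<beta> \<inter> {\<delta>. \<delta> ! i \<noteq> g} \<subseteq> {(replicate m g)[i := \<beta> ! i]}"
proof
  fix \<delta> assume \<delta>: "\<delta> \<in> geodesic_neighbours \<Gamma> m g \<beta> \<inter> {\<delta>. \<delta> ! i \<noteq> g}"
  then obtain j where j: "j < m" "\<delta> = (replicate m g)[j := \<beta> ! j]"
    using geodesic_neighbours_eq[OF \<beta> g] by blast
  then have "i = j" using \<delta> nth_replicate_update[OF i, of g j "\<beta> ! j"] by (auto split: if_splits)
  then show "\<delta> \<in> {(replicate m g)[i := \<beta> ! i]}" using j by simp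
qed

lemma replicate_update_unique:
  assumes fin: "finite \<Gamma>" and \<Lambda>: "\<Lambda> \<subseteq> dist_rel \<Gamma> m 1 `` {replicate m g}"
    and card: "card (\<Lambda> \<inter> {\<beta> \<in> cart_power \<Gamma> m. hdist m (replicate m g) \<beta> = 1 \<and> \<beta> ! i \<noteq> g}) \<le> 1"
    and i: "i < m" and x: "x \<noteq> g" "(replicate m g)[i := x] \<in> \<Lambda>"
    and y: "y \<noteq> g" "(replicate m g)[i := y] \<in> \<Lambda>"
  shows "x = y"
proof -
  let ?\<alpha> = "replicate m g"
  let ?G = "\<Lambda> \<inter> {\<beta> \<in> cart_power \<Gamma> m. hdist m ?\<alpha> \<beta> = 1 \<and> \<beta> ! i \<noteq> g}"
  have "finite ?G" by (rule finite_subset[OF _ finite_cart_power[OF fin]]) auto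
  moreover have "?\<alpha>[i := x] \<in> ?G" "?\<alpha>[i := y] \<in> ?G" using x y i \<Lambda> by (auto simp: dist_rel_iff)
  ultimately have eq: "?\<alpha>[i := x] = ?\<alpha>[i := y]" using card card_le_Suc0_iff_eq by auto
  have "x = ?\<alpha>[i := x] ! i" using i by simp
  also have "\<dots> = ?\<alpha>[i := y] ! i" by (simp only: eq)
  also have "\<dots> = y" using i by simp
  finally show ?thesis .
qed

text \<open>Conversely, a set of neighbours of \<open>\<alpha>\<close> using each coordinate at most once is the
  image of the point that carries the moved entries in the respective coordinates.\<close>

lemma geodesic_neighbours_surj:
  assumes g: "g \<in> \<Gamma>" and fin: "finite \<Gamma>"
    and \<Lambda>: "\<Lambda> \<subseteq> dist_rel \<Gamma> m 1 `` {replicate m g}"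
    and card: "\<forall>i<m. card (\<Lambda> \<inter> {\<beta> \<in> cart_power \<Gamma> m. hdist m (replicate m g) \<beta> = 1 \<and> \<beta> ! i \<noteq> g}) \<le> 1"
  shows "\<Lambda> \<in> geodesic_neighbours \<Gamma> m g ` cart_power \<Gamma> m"
proof -
  let ?\<alpha> = "replicate m g"
  let ?moved = "\<lambda>i x. x \<noteq> g \<and> ?\<alpha>[i := x] \<in> \<Lambda>"
  have nb: "\<delta> \<in> cart_power \<Gamma> m" if "\<delta> \<in> \<Lambda>" for \<delta>
    using that \<Lambda> by (auto simp: dist_rel_iff)
  have unique: "x = y" if "i < m" "?moved i x" "?moved i y" for i x y
    using replicate_update_unique[OF fin \<Lambda>] card that by blast
  define \<beta> where "\<beta> = map (\<lambda>i. if \<exists>x. ?moved i x then SOME x. ?moved i x else g) [0..<m]"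
  have \<beta>_moved: "?moved i (\<beta> ! i)" if "i < m" "\<exists>x. ?moved i x" for i
    unfolding \<beta>_def using that someI_ex[OF that(2)] by simp
  have \<beta>_unmoved: "\<beta> ! i = g" if "i < m" "\<not> (\<exists>x. ?moved i x)" for i
    unfolding \<beta>_def using that by (simp del: not_ex)
  have \<beta>_cart: "\<beta> \<in> cart_power \<Gamma> m"
  proof (rule cart_powerI)
    show "length \<beta> = m" unfolding \<beta>_def by simp
    fix i assume i: "i < m"
    show "\<beta> ! i \<in> \<Gamma>"
    proof (cases "\<exists>x. ?moved i x")
      case True
      then have "?\<alpha>[i := \<beta> ! i] \<in> cart_power \<Gamma> m" using \<beta>_moved[OF i] nb by blast
      moreover have "?\<alpha>[i := \<beta> ! i] ! i = \<beta> ! i" using i by simp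
      ultimately show ?thesis using cart_powerD[OF _ i] by metis
    qed (use \<beta>_unmoved i g in simp)
  qed
  have "geodesic_neighbours \<Gamma> m g \<beta> = \<Lambda>"
    unfolding geodesic_neighbours_eq[OF \<beta>_cart g]
  proof
    show "{?\<alpha>[j := \<beta> ! j] | j. j < m \<and> \<beta> ! j \<noteq> g} \<subseteq> \<Lambda>"
    proof
      fix \<delta> assume "\<delta> \<in> {?\<alpha>[j := \<beta> ! j] | j. j < m \<and> \<beta> ! j \<noteq> g}"
      then obtain j where j: "j < m" "\<beta> ! j \<noteq> g" "\<delta> = ?\<alpha>[j := \<beta> ! j]" by blast
      then have "\<exists>x. ?moved j x" using \<beta>_unmoved by blast
      then show "\<delta> \<in> \<Lambda>" using \<beta>_moved[OF j(1)] j(3) by simp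
    qed
    show "\<Lambda> \<subseteq> {?\<alpha>[j := \<beta> ! j] | j. j < m \<and> \<beta> ! j \<noteq> g}"
    proof
      fix \<delta> assume \<delta>: "\<delta> \<in> \<Lambda>"
      then obtain j x where jx: "j < m" "x \<noteq> g" "\<delta> = ?\<alpha>[j := x]"
        using \<Lambda> neighbour_of_replicate_iff[OF g] by blast
      then have "?moved j x" using \<delta> by simp
      then have "\<beta> ! j = x" using unique[OF jx(1) \<beta>_moved[OF jx(1)]] by blast
      then show "\<delta> \<in> {?\<alpha>[j := \<beta> ! j] | j. j < m \<and> \<beta> ! j \<noteq> g}" using jx by blast
    qed
  qed
  then show ?thesis using \<beta>_cart by blast
qed

lemma geodesic_neighbours_image:
  assumes g: "g \<in> \<Gamma>" and fin: "finite \<Gamma>"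
  shows "geodesic_neighbours \<Gamma> m g ` cart_power \<Gamma> m =
    {\<Lambda>. \<Lambda> \<subseteq> dist_rel \<Gamma> m 1 `` {replicate m g} \<and>
      (\<forall>i<m. card (\<Lambda> \<inter> {\<beta> \<in> cart_power \<Gamma> m. hdist m (replicate m g) \<beta> = 1 \<and> \<beta> ! i \<noteq> g}) \<le> 1)}"
    (is "_ = {\<Lambda>. \<Lambda> \<subseteq> ?\<alpha>r \<and> (\<forall>i<m. card (\<Lambda> \<inter> ?G i) \<le> 1)}")
proof
  show "{\<Lambda>. \<Lambda> \<subseteq> ?\<alpha>r \<and> (\<forall>i<m. card (\<Lambda> \<inter> ?G i) \<le> 1)} \<subseteq> geodesic_neighbours \<Gamma> m g ` cart_power \<Gamma> m"
    using geodesic_neighbours_surj[OF g fin] by blast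
  show "geodesic_neighbours \<Gamma> m g ` cart_power \<Gamma> m \<subseteq> {\<Lambda>. \<Lambda> \<subseteq> ?\<alpha>r \<and> (\<forall>i<m. card (\<Lambda> \<inter> ?G i) \<le> 1)}"
  proof (rule image_subsetI, intro CollectI conjI allI impI)
    fix \<beta> show "geodesic_neighbours \<Gamma> m g \<beta> \<subseteq> ?\<alpha>r" unfolding geodesic_neighbours_def by (rule Int_lower2)
  next
    fix \<beta> i assume \<beta>: "\<beta> \<in> cart_power \<Gamma> m" and i: "i < m"
    have "geodesic_neighbours \<Gamma> m g \<beta> \<inter> ?G i \<subseteq> {(replicate m g)[i := \<beta> ! i]}"
      using geodesic_neighbours_coordinate[OF \<beta> g i] by auto
    then have "card (geodesic_neighbours \<Gamma> m g \<beta> \<inter> ?G i) \<le> card {(replicate m g)[i := \<beta> ! i]}"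
      by (rule card_mono[rotated]) simp
    then show "card (geodesic_neighbours \<Gamma> m g \<beta> \<inter> ?G i) \<le> 1" by simp
  qed
qed

theorem lemma7p2:
  fixes \<Gamma> :: "'a set" and T :: "('a \<times> 'a) set set" and m :: nat
    and L :: "(nat \<Rightarrow> nat) set" and \<gamma>\<^sub>0 :: 'a
  assumes "coherent_configuration \<Gamma> T"
    and "m \<ge> 1"
    and "perm_group_on {0..<m} L"
    and "\<gamma>\<^sub>0 \<in> \<Gamma>"
  shows "let \<Omega> = cart_power \<Gamma> m; S = exp_rels T m L;
             \<alpha> = replicate m \<gamma>\<^sub>0;
             r = dist_rel \<Gamma> m;
             \<alpha>r = r 1 `` {\<alpha>};
             Gam = (\<lambda>i. {\<beta>\<in>\<Omega>. hdist m \<alpha> \<beta> = 1 \<and> \<beta> ! i \<noteq> \<gamma>\<^sub>0});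
             \<rho> = (\<lambda>\<beta>. r (int (hdist m \<alpha> \<beta>) - 1) `` {\<beta>} \<inter> \<alpha>r)
         in inj_on \<rho> \<Omega> \<and>
            \<rho> ` \<Omega> = {\<Lambda>. \<Lambda> \<subseteq> \<alpha>r \<and> (\<forall>i<m. card (\<Lambda> \<inter> Gam i) \<le> 1)} \<and>
            is_base \<Omega> (point_extension \<Omega> S \<alpha>) \<alpha>r"
proof -
  note cc = assms(1) and L = assms(3) and \<gamma>\<^sub>0 = assms(4)
  define \<Omega> where "\<Omega> = cart_power \<Gamma> m"
  define \<alpha> where "\<alpha> = replicate m \<gamma>\<^sub>0"
  define \<alpha>r where "\<alpha>r = dist_rel \<Gamma> m 1 `` {\<alpha>}"
  define S\<^sub>\<alpha> where "S\<^sub>\<alpha> = point_extension \<Omega> (exp_rels T m L) \<alpha>"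
  define S' where "S' = smallest_fission \<Omega> S\<^sub>\<alpha> (\<lambda>S'. \<forall>\<beta>\<in>\<alpha>r. is_fiber S' {\<beta>})"
  have fin: "finite \<Omega>" unfolding \<Omega>_def using finite_cart_power[OF cc_finite[OF cc]] .
  have \<alpha>: "\<alpha> \<in> \<Omega>" unfolding \<alpha>_def \<Omega>_def by (rule replicate_cart_power[OF \<gamma>\<^sub>0])
  have S\<^sub>\<alpha>: "fission \<Omega> S\<^sub>\<alpha> (exp_rels T m L)" "is_fiber S\<^sub>\<alpha> {\<alpha>}"
    unfolding S\<^sub>\<alpha>_def using point_extension_fission[OF fin _ \<alpha>] exp_rels_subset[OF cc L] \<Omega>_def by simp_all
  have "\<Union>S\<^sub>\<alpha> \<subseteq> \<Omega> \<times> \<Omega>" "\<alpha>r \<subseteq> \<Omega>"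
    using S\<^sub>\<alpha>(1) cc_subset unfolding fission_def \<alpha>r_def \<Omega>_def by (auto simp: dist_rel_iff)
  then have S': "fission \<Omega> S' S\<^sub>\<alpha>" "\<forall>\<beta>\<in>\<alpha>r. is_fiber S' {\<beta>}"
    unfolding S'_def by (rule smallest_fission_singleton_fibers[OF fin])+
  have cc': "coherent_configuration \<Omega> S'" using S'(1) unfolding fission_def by simp
  have dist_rels: "dist_rel \<Gamma> m k \<in> rels S'" for k
    using dist_rel_in_rels_exp_rels[OF cc L] S\<^sub>\<alpha>(1) S'(1) unfolding fission_def by blast
  have "\<forall>\<gamma>\<in>\<Omega>. Id_on {\<gamma>} \<in> S'"
  proof (rule singleton_fibers_if_separated[OF cc' \<alpha> _ _ dist_rels])
    show "Id_on {\<alpha>} \<in> S'" using fission_singleton_fiber[OF S'(1) S\<^sub>\<alpha>(2)] unfolding is_fiber_def .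
    show "\<forall>\<beta>\<in>\<alpha>r. Id_on {\<beta>} \<in> S'" using S'(2) unfolding is_fiber_def .
    show "(x, y) \<in> dist_rel \<Gamma> m k \<longleftrightarrow> x \<in> \<Omega> \<and> y \<in> \<Omega> \<and> int (hdist m x y) = k" for x y k
      unfolding \<Omega>_def by (rule dist_rel_iff)
    show "inj_on (\<lambda>\<gamma>. dist_rel \<Gamma> m (int (hdist m \<alpha> \<gamma>) - 1) `` {\<gamma>} \<inter> \<alpha>r) \<Omega>"
      using inj_on_geodesic_neighbours[OF \<gamma>\<^sub>0, of m]
      unfolding geodesic_neighbours_def[abs_def] \<Omega>_def \<alpha>_def \<alpha>r_def .
  qed
  then have "is_base \<Omega> S\<^sub>\<alpha> \<alpha>r"
    unfolding is_base_def S'_def[symmetric] by (rule complete_cc_if_singleton_fibers[OF cc'])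
  then show ?thesis
    using inj_on_geodesic_neighbours[OF \<gamma>\<^sub>0] geodesic_neighbours_image[OF \<gamma>\<^sub>0 cc_finite[OF cc]]
    unfolding Let_def geodesic_neighbours_def[abs_def] \<Omega>_def \<alpha>_def \<alpha>r_def S\<^sub>\<alpha>_def
    by (intro conjI)
qed

end
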